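(* For every partial abstraction $A$ and every expression $e$ (containing no $\&i$ markers, abstraction variables or holes), if $\textsc{LambdaUnify}(A,e)\rightsquigarrow l$ then $l\circ A=e$.
   Context: Expressions: $e ::= \lambda.\,e\mid(e\ e)\mid\$i\mid\&i\mid t$ with de Bruijn indices $\$i$ ($i\in\mathbb{N}$; $\$i$ refers to the $i$-th closest enclosing $\lambda$), overshifted markers $\&i$ ($i\in\mathbb{Z}$) and primitive symbols $t$. Partial abstractions: $A ::= \lambda.\,A\mid(A\ A)\mid\$i\mid t\mid\alpha\mid ??_j$ with abstraction variables $\alpha$ and uniquely indexed holes $??_j$. Downshift: $\downarrow_d(\lambda.b)=\lambda.\downarrow_{d+1}b$; $\downarrow_d(f\ x)=(\downarrow_d f)(\downarrow_d x)$; $\downarrow_d\$i=\$i$ if $i<d$, $\$(i-1)$ if $i>d$, $\&(i-1)$ if $i=d$; $\downarrow_d\&i=\&(i-1)$; $\downarrow_d t=t$. Upshift: $\uparrow_d(\lambda.b)=\lambda.\uparrow_{d+1}b$; $\uparrow_d(f\ x)=(\uparrow_d f)(\uparrow_d x)$; $\uparrow_d\$i=\$i$ if $i<d$, $\$(i+1)$ if $i\ge d$; $\uparrow_d\&i=\&(i+1)$ if $i+1\ne d$, $\$(i+1)$ if $i+1=d$; $\uparrow_d t=t$. A mapping is a finite map from abstraction variables and holes to expressions; $\textsc{DownshiftAll}(l)$ and $\textsc{UpshiftAll}(l)$ apply $\downarrow_0$, resp. $\uparrow_0$, to every bound expression; $\mathrm{merge}(l_1,l_2)$ is the union of $l_1,l_2$,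 undefined if some key is bound to two different expressions. $\textsc{LambdaUnify}$ is the relation given by: $\textsc{LambdaUnify}(\alpha,e)\rightsquigarrow[\alpha\to e]$; $\textsc{LambdaUnify}(??_i,e)\rightsquigarrow[??_i\to e]$; if $\textsc{LambdaUnify}(A_1,e_1)\rightsquigarrow l_1$, $\textsc{LambdaUnify}(A_2,e_2)\rightsquigarrow l_2$ and $l=\mathrm{merge}(l_1,l_2)$ is defined then $\textsc{LambdaUnify}((A_1\ A_2),(e_1\ e_2))\rightsquigarrow l$; if $\textsc{LambdaUnify}(A,e)\rightsquigarrow l'$ then $\textsc{LambdaUnify}(\lambda.A,\lambda.e)\rightsquigarrow\textsc{DownshiftAll}(l')$; and $\textsc{LambdaUnify}(e,e)\rightsquigarrow[\,]$ when $A$ is an expression (no holes or abstraction variables) identical to $e$. Substitution $l\circ A$ (which models beta-reducing $(\lambda\alpha_i.\dots\lambda ??_j.\dots A)$ applied to the bound expressions): $l\circ\lambda.b=\lambda.(\textsc{UpshiftAll}(l)\circ b)$; $l\circ(f\ x)=(l\circ f)(l\circ x)$; $l\circ\$i=\$i$; $l\circ\alpha=l[\alpha]$; $l\circ ??_i=l[??_i]$; $l\circ t=t$. *)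

theory Defs
  imports Main
begin

text \<open>Expressions: lambda, application, de Bruijn index, overshifted marker, primitive.\<close>
datatype 'p expr = ELam "'p expr" | EApp "'p expr" "'p expr" | EVar nat | EAmp int | EPrim 'p

datatype ('p, 'v) pabs = ALam "('p, 'v) pabs" | AApp "('p, 'v) pabs" "('p, 'v) pabs"
  | AVar nat | APrim 'p | AAbs 'v | AHole nat

datatype 'v key = KAbs 'v | KHole nat

type_synonym ('p, 'v) mapping = "'v key \<rightharpoonup> 'p expr"

fun no_markers :: "'p expr \<Rightarrow> bool" where
  "no_markers (ELam b) = no_markers b"
| "no_markers (EApp f x) = (no_markers f \<and> no_markers x)"
| "no_markers (EVar i) = True"
| "no_markers (EAmp i) = False"
| "no_markers (EPrim t) = True"

fun downshift :: "nat \<Rightarrow> 'p expr \<Rightarrow> 'p expr" where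
  "downshift d (ELam b) = ELam (downshift (Suc d) b)"
| "downshift d (EApp f x) = EApp (downshift d f) (downshift d x)"
| "downshift d (EVar i) =
     (if i < d then EVar i else if i > d then EVar (i - 1) else EAmp (int i - 1))"
| "downshift d (EAmp i) = EAmp (i - 1)"
| "downshift d (EPrim t) = EPrim t"

fun upshift :: "nat \<Rightarrow> 'p expr \<Rightarrow> 'p expr" where
  "upshift d (ELam b) = ELam (upshift (Suc d) b)"
| "upshift d (EApp f x) = EApp (upshift d f) (upshift d x)"
| "upshift d (EVar i) = (if i < d then EVar i else EVar (i + 1))"
| "upshift d (EAmp i) = (if i + 1 \<noteq> int d then EAmp (i + 1) else EVar (nat (i + 1)))"
| "upshift d (EPrim t) = EPrim t"

definition downshift_all :: "('p, 'v) mapping \<Rightarrow> ('p, 'v) mapping" where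
  "downshift_all l = (\<lambda>k. map_option (downshift 0) (l k))"

definition upshift_all :: "('p, 'v) mapping \<Rightarrow> ('p, 'v) mapping" where
  "upshift_all l = (\<lambda>k. map_option (upshift 0) (l k))"

definition merge :: "('p, 'v) mapping \<Rightarrow> ('p, 'v) mapping \<Rightarrow> ('p, 'v) mapping option" where
  "merge l1 l2 = (if \<forall>k \<in> dom l1 \<inter> dom l2. l1 k = l2 k then Some (l1 ++ l2) else None)"

fun pabs_to_expr :: "('p, 'v) pabs \<Rightarrow> 'p expr option" where
  "pabs_to_expr (ALam b) = map_option ELam (pabs_to_expr b)"
| "pabs_to_expr (AApp f x) =
     (case (pabs_to_expr f, pabs_to_expr x) of (Some f', Some x') \<Rightarrow> Some (EApp f' x') | _ \<Rightarrow> None)"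
| "pabs_to_expr (AVar i) = Some (EVar i)"
| "pabs_to_expr (APrim t) = Some (EPrim t)"
| "pabs_to_expr (AAbs a) = None"
| "pabs_to_expr (AHole j) = None"

inductive lambda_unify :: "('p, 'v) pabs \<Rightarrow> 'p expr \<Rightarrow> ('p, 'v) mapping \<Rightarrow> bool" where
  lu_abs: "lambda_unify (AAbs a) e [KAbs a \<mapsto> e]"
| lu_hole: "lambda_unify (AHole i) e [KHole i \<mapsto> e]"
| lu_app: "\<lbrakk>lambda_unify A1 e1 l1; lambda_unify A2 e2 l2; merge l1 l2 = Some l\<rbrakk>
           \<Longrightarrow> lambda_unify (AApp A1 A2) (EApp e1 e2) l"
| lu_lam: "lambda_unify A e l' \<Longrightarrow> lambda_unify (ALam A) (ELam e) (downshift_all l')"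
| lu_eq: "pabs_to_expr A = Some e \<Longrightarrow> lambda_unify A e Map.empty"

fun subst :: "('p, 'v) mapping \<Rightarrow> ('p, 'v) pabs \<Rightarrow> 'p expr option" where
  "subst l (ALam b) = map_option ELam (subst (upshift_all l) b)"
| "subst l (AApp f x) =
     (case (subst l f, subst l x) of (Some f', Some x') \<Rightarrow> Some (EApp f' x') | _ \<Rightarrow> None)"
| "subst l (AVar i) = Some (EVar i)"
| "subst l (AAbs a) = l (KAbs a)"
| "subst l (AHole i) = l (KHole i)"
| "subst l (APrim t) = Some (EPrim t)"

end

theory Submission
  imports Defs
begin

text \<open>In the application rule, both
  sub-mappings are contained in the merged one and substitution is monotone in the
  mapping. In the lambda rule, substitution under the binder upshifts the mapping,
  and this undoes the downshift of the rule: the bound expressions arise from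
  downshifting marker-free expressions, so every marker in them is negative and
  never becomes a bound variable again under upshift 0.\<close>

text \<open>Under k further binders every marker must lie below d + k; this excludes the
  marker that upshift d would turn back into a bound variable, and downshift d keeps it so.\<close>
fun markers_below :: "nat \<Rightarrow> 'p expr \<Rightarrow> bool" where
  "markers_below d (ELam b) = markers_below (Suc d) b"
| "markers_below d (EApp f x) = (markers_below d f \<and> markers_below d x)"
| "markers_below d (EVar i) = True"
| "markers_below d (EAmp i) = (i < int d)"
| "markers_below d (EPrim t) = True"

lemma no_markers_imp_markers_below: "no_markers e \<Longrightarrow> markers_below d e"
  by (induction e arbitrary: d) auto

lemma markers_below_downshift: "markers_below d e \<Longrightarrow> markers_below d (downshift d e)"
  by (induction e arbitrary: d) auto

lemma upshift_downshift: "markers_below d e \<Longrightarrow> upshift d (downshift d e) = e"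
  by (induction e arbitrary: d) auto

lemma upshift_all_downshift_all:
  assumes "\<forall>v \<in> ran l. markers_below 0 v"
  shows "upshift_all (downshift_all l) = l"
proof
  fix k
  show "upshift_all (downshift_all l) k = l k"
    using assms upshift_downshift[of 0] ranI[of l k]
    by (cases "l k") (auto simp: upshift_all_def downshift_all_def)
qed

lemma ran_downshift_all: "ran (downshift_all l) = downshift 0 ` ran l"
  unfolding downshift_all_def by (rule ran_map_option)

lemma upshift_all_map_le: "l \<subseteq>\<^sub>m l' \<Longrightarrow> upshift_all l \<subseteq>\<^sub>m upshift_all l'"
  unfolding map_le_def upshift_all_def by force

lemma merge_Some_map_le:
  assumes "merge l1 l2 = Some l"
  shows "l1 \<subseteq>\<^sub>m l" and "l2 \<subseteq>\<^sub>m l"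
proof -
  from assms have l: "l = l1 ++ l2" and compatible: "\<forall>k \<in> dom l1 \<inter> dom l2. l1 k = l2 k"
    by (auto simp: merge_def split: if_splits)
  show "l1 \<subseteq>\<^sub>m l"
    using compatible unfolding l map_le_def by (force simp: map_add_def split: option.splits)
  show "l2 \<subseteq>\<^sub>m l"
    unfolding l by simp
qed

lemma ran_merge_subset: "merge l1 l2 = Some l \<Longrightarrow> ran l \<subseteq> ran l1 \<union> ran l2"
  by (auto simp: merge_def ran_def map_add_def split: if_splits option.splits)

lemma map_le_SomeD: "l \<subseteq>\<^sub>m l' \<Longrightarrow> l k = Some v \<Longrightarrow> l' k = Some v"
  unfolding map_le_def by (metis domI)

lemma subst_map_le: "subst l A = Some e \<Longrightarrow> l \<subseteq>\<^sub>m l' \<Longrightarrow> subst l' A = Some e"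
proof (induction l A arbitrary: e l' rule: subst.induct)
  case (1 l b)
  from "1.prems"(1) obtain b' where b': "subst (upshift_all l) b = Some b'" and e: "e = ELam b'"
    by auto
  show ?case
    using "1.IH"[OF b' upshift_all_map_le[OF "1.prems"(2)]] e by simp
next
  case (2 l f x)
  from "2.prems"(1) obtain f' x' where f': "subst l f = Some f'" and x': "subst l x = Some x'"
    and e: "e = EApp f' x'"
    by (auto split: option.splits)
  show ?case
    using "2.IH"(1)[OF f' "2.prems"(2)] "2.IH"(2)[OF x' "2.prems"(2)] e by simp
qed (auto intro: map_le_SomeD)

lemma subst_pabs_to_expr: "pabs_to_expr A = Some e \<Longrightarrow> subst l A = Some e"
  by (induction A arbitrary: e l) (auto split: option.splits)

lemma lambda_unify_ran_markers_below:
  "lambda_unify A e l \<Longrightarrow> no_markers e \<Longrightarrow> \<forall>v \<in> ran l. markers_below 0 v"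
proof (induction rule: lambda_unify.induct)
  case (lu_app A1 e1 l1 A2 e2 l2 l)
  from lu_app.prems have "no_markers e1" and "no_markers e2"
    by simp_all
  with lu_app.IH ran_merge_subset[OF lu_app.hyps(3)] show ?case
    by blast
next
  case (lu_lam A e l')
  then show ?case
    by (simp add: ran_downshift_all markers_below_downshift)
qed (simp_all add: no_markers_imp_markers_below)

theorem theoremB9:
  fixes A :: "('p, 'v) pabs" and e :: "'p expr" and l :: "('p, 'v) mapping"
  assumes "no_markers e"
    and "lambda_unify A e l"
  shows "subst l A = Some e"
  using assms(2,1)
proof (induction rule: lambda_unify.induct)
  case (lu_app A1 e1 l1 A2 e2 l2 l)
  from lu_app.prems have e1: "no_markers e1" and e2: "no_markers e2"
    by simp_all
  have "subst l A1 = Some e1"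
    using lu_app.IH(1)[OF e1] merge_Some_map_le(1)[OF lu_app.hyps(3)] by (rule subst_map_le)
  moreover have "subst l A2 = Some e2"
    using lu_app.IH(2)[OF e2] merge_Some_map_le(2)[OF lu_app.hyps(3)] by (rule subst_map_le)
  ultimately show ?case
    by simp
next
  case (lu_lam A e l')
  then have "upshift_all (downshift_all l') = l'"
    by (simp add: lambda_unify_ran_markers_below upshift_all_downshift_all)
  with lu_lam show ?case
    by simp
qed (simp_all add: subst_pabs_to_expr)

end
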